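(* There exist a finite-dimensional inner product vector space $(E,g)$ over $k$ ($k=\mathbb R$ or $\mathbb C$), an endomorphism $f\in\operatorname{End}_k(E)$ and $f$-invariant subspaces $H_1,\dots,H_n$ with $E=H_1\oplus\dots\oplus H_n$ such that $\widetilde{\mathcal H}_f^\perp\ne[\operatorname{Ker} f]^\perp$ and $\mathcal H_f^\perp\ne[\operatorname{Im} f]^\perp$.
   Context: Write $f_i=f|_{H_i}$. For a subspace $W\subseteq H_i$, $[W]_i^\perp=\{v\in H_i:g(w,v)=0\ \forall w\in W\}$; for a subspace $U\subseteq E$, $U^\perp$ is its orthogonal complement in $E$. Set $\mathcal H_f^\perp=[\operatorname{Im} f_1]_1^\perp\oplus\dots\oplus[\operatorname{Im} f_n]_n^\perp$ and $\widetilde{\mathcal H}_f^\perp=[\operatorname{Ker} f_1]_1^\perp\oplus\dots\oplus[\operatorname{Ker} f_n]_n^\perp$. *)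

theory Defs
  imports Complex_Main
begin

text \<open>Concrete model of vector spaces over a field k (k = real or complex):
  vectors are functions nat => k with pointwise operations; a finite-dimensional
  vector space E is a subspace of this ambient space with a finite spanning set.\<close>

type_synonym 'k vec = "nat \<Rightarrow> 'k"

definition vzero :: "'k::field vec" where
  "vzero = (\<lambda>j. 0)"

definition vadd :: "'k::field vec \<Rightarrow> 'k vec \<Rightarrow> 'k vec" where
  "vadd u v = (\<lambda>j. u j + v j)"

definition smul :: "'k::field \<Rightarrow> 'k vec \<Rightarrow> 'k vec" where
  "smul c v = (\<lambda>j. c * v j)"

definition is_subspace :: "'k::field vec set \<Rightarrow> bool" where
  "is_subspace W \<longleftrightarrow> vzero \<in> W \<and> (\<forall>u\<in>W. \<forall>v\<in>W. vadd u v \<in> W)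
     \<and> (\<forall>c. \<forall>v\<in>W. smul c v \<in> W)"

definition vspan :: "'k::field vec set \<Rightarrow> 'k vec set" where
  "vspan B = {v. \<exists>S c. finite S \<and> S \<subseteq> B \<and> v = (\<lambda>j. \<Sum>b\<in>S. c b * b j)}"

definition finite_dim :: "'k::field vec set \<Rightarrow> bool" where
  "finite_dim E \<longleftrightarrow> (\<exists>B. finite B \<and> B \<subseteq> E \<and> vspan B = E)"

text \<open>Inner product g on E with values in k; emb : k -> complex is the embedding
  of the scalar field (of_real for k = real, id for k = complex).  g is linear in
  the first argument, (conjugate) symmetric and positive definite.\<close>

definition is_inner_product ::
  "('k::field \<Rightarrow> complex) \<Rightarrow> 'k vec set \<Rightarrow> ('k vec \<Rightarrow> 'k vec \<Rightarrow> 'k) \<Rightarrow> bool" where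
  "is_inner_product emb E g \<longleftrightarrow>
     (\<forall>u\<in>E. \<forall>v\<in>E. \<forall>w\<in>E. \<forall>a b.
        g (vadd (smul a u) (smul b v)) w = a * g u w + b * g v w)
   \<and> (\<forall>u\<in>E. \<forall>v\<in>E. emb (g u v) = cnj (emb (g v u)))
   \<and> (\<forall>v\<in>E. v \<noteq> vzero \<longrightarrow> Im (emb (g v v)) = 0 \<and> Re (emb (g v v)) > 0)"

text \<open>k-linear endomorphism of E (only its values on E matter).\<close>

definition is_endo :: "'k::field vec set \<Rightarrow> ('k vec \<Rightarrow> 'k vec) \<Rightarrow> bool" where
  "is_endo E f \<longleftrightarrow> (\<forall>v\<in>E. f v \<in> E) \<and>
     (\<forall>u\<in>E. \<forall>v\<in>E. \<forall>a b. f (vadd (smul a u) (smul b v)) = vadd (smul a (f u)) (smul b (f v)))"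

definition kerf :: "'k::field vec set \<Rightarrow> ('k vec \<Rightarrow> 'k vec) \<Rightarrow> 'k vec set" where
  "kerf V f = {v \<in> V. f v = vzero}"

definition orth_in :: "('k::field vec \<Rightarrow> 'k vec \<Rightarrow> 'k) \<Rightarrow> 'k vec set \<Rightarrow> 'k vec set \<Rightarrow> 'k vec set" where
  "orth_in g V W = {v \<in> V. \<forall>w\<in>W. g w v = 0}"

definition subspace_sum :: "nat \<Rightarrow> (nat \<Rightarrow> 'k::field vec set) \<Rightarrow> 'k vec set" where
  "subspace_sum n H = {v. \<exists>h. (\<forall>i\<in>{1..n}. h i \<in> H i) \<and> v = (\<lambda>j. \<Sum>i=1..n. h i j)}"

definition is_direct_sum :: "'k::field vec set \<Rightarrow> nat \<Rightarrow> (nat \<Rightarrow> 'k vec set) \<Rightarrow> bool" where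
  "is_direct_sum E n H \<longleftrightarrow> (\<forall>i\<in>{1..n}. is_subspace (H i) \<and> H i \<subseteq> E)
     \<and> subspace_sum n H = E
     \<and> (\<forall>h. (\<forall>i\<in>{1..n}. h i \<in> H i) \<and> (\<lambda>j. \<Sum>i=1..n. h i j) = vzero
            \<longrightarrow> (\<forall>i\<in>{1..n}. h i = vzero))"

end

theory Submission
  imports Defs
begin

(* Take E = k^2 with the standard inner product, H_1 the line through e_0, H_2 the
   diagonal, and f the projection onto H_1 along H_2.  Then f is the identity on H_1
   and zero on H_2, so the summands [Ker f_1]^perp = H_1 and [Im f_2]^perp = H_2 of
   the two sums contain e_0 and the diagonal vector d = e_0 + e_1 respectively.  But
   d lies in Ker f and e_0 in Im f, and the two are not orthogonal. *)

lemma vadd_vzero_left [simp]: "vadd vzero v = v"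
  and vadd_vzero_right [simp]: "vadd v vzero = v"
  by (simp_all add: vadd_def vzero_def)

lemma subspace_sum_two: "subspace_sum 2 H = {vadd u w |u w. u \<in> H 1 \<and> w \<in> H 2}"
proof -
  have two: "{1..2::nat} = {1, 2}" by auto
  show ?thesis
    unfolding subspace_sum_def two
  proof (intro equalityI subsetI)
    fix v assume "v \<in> {v. \<exists>h. (\<forall>i\<in>{1, 2}. h i \<in> H i) \<and> v = (\<lambda>j. \<Sum>i\<in>{1, 2}. h i j)}"
    then obtain h :: "nat \<Rightarrow> _" where "h 1 \<in> H 1" "h 2 \<in> H 2" "v = vadd (h 1) (h 2)"
      by (auto simp: vadd_def)
    then show "v \<in> {vadd u w |u w. u \<in> H 1 \<and> w \<in> H 2}" by blast
  next
    fix v assume "v \<in> {vadd u w |u w. u \<in> H 1 \<and> w \<in> H 2}"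
    then obtain u w where "u \<in> H 1" "w \<in> H 2" "v = vadd u w" by blast
    then show "v \<in> {v. \<exists>h. (\<forall>i\<in>{1, 2}. h i \<in> H i) \<and> v = (\<lambda>j. \<Sum>i\<in>{1, 2}. h i j)}"
      by (intro CollectI exI[of _ "\<lambda>i. if i = 1 then u else w"]) (auto simp: vadd_def)
  qed
qed

lemma is_direct_sum_twoI:
  assumes "is_subspace (H 1)" "is_subspace (H 2)" "H 1 \<subseteq> E" "H 2 \<subseteq> E"
    and "{vadd u w |u w. u \<in> H 1 \<and> w \<in> H 2} = E"
    and "H 1 \<inter> H 2 \<subseteq> {vzero}"
  shows "is_direct_sum E 2 H"
  unfolding is_direct_sum_def
proof (intro conjI allI impI ballI)
  fix i :: nat assume "i \<in> {1..2}"
  then have "i = 1 \<or> i = 2" by auto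
  with assms(1-4) show "is_subspace (H i)" "H i \<subseteq> E" by auto
next
  show "subspace_sum 2 H = E" using assms(5) by (simp add: subspace_sum_two)
next
  fix h i assume h: "(\<forall>i\<in>{1..2}. h i \<in> H i) \<and> (\<lambda>j. \<Sum>i=1..2. h i j) = vzero"
    and "i \<in> {1..2::nat}"
  then have i: "i = 1 \<or> i = 2" by auto
  have "h 1 j + h 2 j = 0" for j
    using fun_cong[OF conjunct2[OF h], of j] by (simp add: numeral_2_eq_2 vzero_def)
  then have h2: "h 2 = smul (-1) (h 1)"
    by (auto simp: smul_def fun_eq_iff eq_neg_iff_add_eq_0 add.commute)
  have "h 2 \<in> H 1"
    unfolding h2 using h assms(1) by (auto simp: is_subspace_def)
  with h assms(6) have "h 2 = vzero" by auto
  then have "h 1 = vzero"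
    using h2 by (simp add: smul_def vzero_def fun_eq_iff)
  with \<open>h 2 = vzero\<close> i show "h i = vzero" by auto
qed

definition plane :: "'k::field vec set" where
  "plane = {v. \<forall>j\<ge>2. v j = 0}"

definition unit_vec :: "nat \<Rightarrow> 'k::field vec" where
  "unit_vec i = (\<lambda>j. if j = i then 1 else 0)"

definition diag :: "'k::field vec" where
  "diag = vadd (unit_vec 0) (unit_vec 1)"

definition line :: "'k::field vec \<Rightarrow> 'k vec set" where
  "line u = range (\<lambda>c. smul c u)"

definition proj_along_diag :: "'k::field vec \<Rightarrow> 'k vec" where
  "proj_along_diag v = smul (v 0 - v 1) (unit_vec 0)"

lemma line_subspace: "is_subspace (line u)"
  unfolding is_subspace_def line_def
proof (intro conjI ballI allI)
  show "vzero \<in> range (\<lambda>c. smul c u)"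
    by (rule range_eqI[where x = 0]) (simp add: vzero_def smul_def)
next
  fix v w assume "v \<in> range (\<lambda>c. smul c u)" "w \<in> range (\<lambda>c. smul c u)"
  then obtain a b where "v = smul a u" "w = smul b u" by blast
  then show "vadd v w \<in> range (\<lambda>c. smul c u)"
    by (intro range_eqI[where x = "a + b"]) (simp add: vadd_def smul_def distrib_right)
next
  fix c v assume "v \<in> range (\<lambda>c. smul c u)"
  then obtain a where "v = smul a u" by blast
  then show "smul c v \<in> range (\<lambda>c. smul c u)"
    by (intro range_eqI[where x = "c * a"]) (simp add: smul_def mult.assoc)
qed

lemma vzero_in_line: "vzero \<in> line u"
  using line_subspace[of u] by (simp add: is_subspace_def)

lemma in_line_self: "u \<in> line u"
  unfolding line_def by (rule range_eqI[where x = 1]) (simp add: smul_def)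

lemma line_subset:
  assumes "is_subspace E" "u \<in> E"
  shows "line u \<subseteq> E"
  using assms by (auto simp: is_subspace_def line_def)

lemma plane_subspace: "is_subspace plane"
  by (auto simp: is_subspace_def plane_def vzero_def vadd_def smul_def)

lemma unit_vec_in_plane: "i \<le> 1 \<Longrightarrow> unit_vec i \<in> plane"
  and diag_in_plane: "diag \<in> plane"
  by (auto simp: plane_def unit_vec_def diag_def vadd_def)

lemma plane_nonzero_coord:
  assumes "v \<in> plane" "v \<noteq> vzero"
  shows "v 0 \<noteq> 0 \<or> v 1 \<noteq> 0"
proof (rule ccontr)
  assume "\<not> (v 0 \<noteq> 0 \<or> v 1 \<noteq> 0)"
  then have "v j = 0" for j
    using assms(1) by (cases "j \<le> 1") (auto simp: plane_def le_Suc_eq)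
  with assms(2) show False by (simp add: vzero_def fun_eq_iff)
qed

lemma finite_dim_plane: "finite_dim (plane :: 'k::field vec set)"
  unfolding finite_dim_def
proof (intro exI conjI)
  let ?B = "{unit_vec 0, unit_vec 1} :: 'k vec set"
  show "finite ?B" "?B \<subseteq> plane" by (simp_all add: unit_vec_in_plane)
  show "vspan ?B = plane"
  proof (intro equalityI subsetI)
    fix v assume "v \<in> vspan ?B"
    then obtain S c where "S \<subseteq> ?B" "v = (\<lambda>j. \<Sum>b\<in>S. c b * b j)"
      unfolding vspan_def by blast
    then show "v \<in> plane"
      unfolding plane_def by (auto intro!: sum.neutral simp: unit_vec_def)
  next
    fix v :: "'k vec" assume v: "v \<in> plane"
    have "unit_vec 0 \<noteq> (unit_vec 1 :: 'k vec)"
      by (auto simp: unit_vec_def fun_eq_iff)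
    then have "(\<Sum>b\<in>?B. (if b = unit_vec 0 then v 0 else v 1) * b j) = v j" for j
      using v by (cases "j \<le> 1") (auto simp: plane_def unit_vec_def le_Suc_eq)
    then show "v \<in> vspan ?B"
      unfolding vspan_def
      by (auto simp: fun_eq_iff
          intro!: exI[of _ ?B] exI[of _ "\<lambda>b. if b = unit_vec 0 then v 0 else v 1"])
  qed
qed

lemma plane_eq_line_sum:
  "{vadd u w |u w. u \<in> line (unit_vec 0) \<and> w \<in> line diag} = plane"
proof (intro equalityI subsetI)
  fix v assume "v \<in> {vadd u w |u w. u \<in> line (unit_vec 0) \<and> w \<in> line diag}"
  then show "v \<in> plane"
    using plane_subspace line_subset[OF plane_subspace] unit_vec_in_plane[of 0] diag_in_plane
    unfolding is_subspace_def by blast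
next
  fix v assume "v \<in> plane"
  then have "v = vadd (smul (v 0 - v 1) (unit_vec 0)) (smul (v 1) diag)"
    by (auto simp: plane_def vadd_def smul_def unit_vec_def diag_def fun_eq_iff)
  then show "v \<in> {vadd u w |u w. u \<in> line (unit_vec 0) \<and> w \<in> line diag}"
    unfolding line_def by blast
qed

lemma line_unit_vec_Int_line_diag: "line (unit_vec 0) \<inter> line diag \<subseteq> {vzero}"
proof
  fix v assume "v \<in> line (unit_vec 0) \<inter> line diag"
  then obtain a b where "v = smul a (unit_vec 0)" "v = smul b diag"
    unfolding line_def by blast
  then have "smul b diag 1 = smul a (unit_vec 0) 1" by simp
  then have "b = 0" by (simp add: smul_def unit_vec_def diag_def vadd_def)
  with \<open>v = smul b diag\<close> show "v \<in> {vzero}"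
    by (simp add: smul_def vzero_def)
qed

lemma proj_along_diag_endo: "is_endo plane proj_along_diag"
  by (auto simp: is_endo_def plane_def proj_along_diag_def vadd_def smul_def unit_vec_def
      fun_eq_iff algebra_simps)

lemma proj_along_diag_on_axis: "u \<in> line (unit_vec 0) \<Longrightarrow> proj_along_diag u = u"
  by (auto simp: line_def proj_along_diag_def smul_def unit_vec_def fun_eq_iff)

lemma proj_along_diag_on_diag: "w \<in> line diag \<Longrightarrow> proj_along_diag w = vzero"
  by (auto simp: line_def proj_along_diag_def smul_def unit_vec_def diag_def vadd_def vzero_def)

definition axis_and_diag :: "nat \<Rightarrow> 'k::field vec set" where
  "axis_and_diag i = (if i = 1 then line (unit_vec 0) else line diag)"

lemma direct_sum_axis_and_diag: "is_direct_sum plane 2 axis_and_diag"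
  using line_subspace line_subset[OF plane_subspace] unit_vec_in_plane[of 0] diag_in_plane
    plane_eq_line_sum line_unit_vec_Int_line_diag
  by (intro is_direct_sum_twoI) (simp_all add: axis_and_diag_def)

lemma axis_and_diag_invariant: "proj_along_diag ` axis_and_diag i \<subseteq> axis_and_diag i"
  by (auto simp: axis_and_diag_def proj_along_diag_on_axis proj_along_diag_on_diag vzero_in_line)

lemma kerf_axis: "kerf (line (unit_vec 0)) proj_along_diag = {vzero}"
  by (auto simp: kerf_def proj_along_diag_on_axis vzero_in_line)

lemma image_diag: "proj_along_diag ` line diag = {vzero}"
  using vzero_in_line by (force simp: proj_along_diag_on_diag)

lemma diag_in_kerf: "diag \<in> kerf plane proj_along_diag"
  by (simp add: kerf_def diag_in_plane proj_along_diag_on_diag in_line_self)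

lemma unit_vec_in_image: "unit_vec 0 \<in> proj_along_diag ` plane"
proof (rule image_eqI)
  show "unit_vec 0 = proj_along_diag (unit_vec 0)"
    by (simp add: proj_along_diag_on_axis in_line_self)
qed (simp add: unit_vec_in_plane)

lemma orth_in_vzero: "(\<And>v. g vzero v = 0) \<Longrightarrow> orth_in g V {vzero} = V"
  by (simp add: orth_in_def)

lemma vzero_in_orth_in: "vzero \<in> V \<Longrightarrow> (\<And>w. g w vzero = 0) \<Longrightarrow> vzero \<in> orth_in g V W"
  by (simp add: orth_in_def)

lemma proj_along_diag_orth_sums_ne:
  fixes g :: "'k::field vec \<Rightarrow> 'k vec \<Rightarrow> 'k"
  assumes zero_left: "\<And>v. g vzero v = 0" and zero_right: "\<And>w. g w vzero = 0"
    and "g diag (unit_vec 0) \<noteq> 0" "g (unit_vec 0) diag \<noteq> 0"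
  shows "subspace_sum 2 (\<lambda>i. orth_in g (axis_and_diag i) (kerf (axis_and_diag i) proj_along_diag))
           \<noteq> orth_in g plane (kerf plane proj_along_diag)" (is "?S_ker \<noteq> _")
    and "subspace_sum 2 (\<lambda>i. orth_in g (axis_and_diag i) (proj_along_diag ` axis_and_diag i))
           \<noteq> orth_in g plane (proj_along_diag ` plane)" (is "?S_im \<noteq> _")
proof -
  have "unit_vec 0 \<in> orth_in g (axis_and_diag 1) (kerf (axis_and_diag 1) proj_along_diag)"
    by (simp add: axis_and_diag_def kerf_axis orth_in_vzero zero_left in_line_self)
  moreover have "vzero \<in> orth_in g (axis_and_diag 2) (kerf (axis_and_diag 2) proj_along_diag)"
    by (simp add: vzero_in_orth_in axis_and_diag_def vzero_in_line zero_right)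
  ultimately have "vadd (unit_vec 0) vzero \<in> ?S_ker"
    unfolding subspace_sum_two by blast
  moreover have "unit_vec 0 \<notin> orth_in g plane (kerf plane proj_along_diag)"
    using diag_in_kerf assms(3) by (auto simp: orth_in_def)
  ultimately show "?S_ker \<noteq> orth_in g plane (kerf plane proj_along_diag)"
    by auto
next
  have "vzero \<in> orth_in g (axis_and_diag 1) (proj_along_diag ` axis_and_diag 1)"
    by (simp add: vzero_in_orth_in axis_and_diag_def vzero_in_line zero_right)
  moreover have "diag \<in> orth_in g (axis_and_diag 2) (proj_along_diag ` axis_and_diag 2)"
    by (simp add: axis_and_diag_def image_diag orth_in_vzero zero_left in_line_self)
  ultimately have "vadd vzero diag \<in> ?S_im"
    unfolding subspace_sum_two by blast
  moreover have "diag \<notin> orth_in g plane (proj_along_diag ` plane)"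
    using unit_vec_in_image assms(4) unfolding orth_in_def by blast
  ultimately show "?S_im \<noteq> orth_in g plane (proj_along_diag ` plane)"
    by auto
qed

lemma orth_sums_counterexample_of_form:
  fixes g :: "'k::field vec \<Rightarrow> 'k vec \<Rightarrow> 'k"
  assumes "is_inner_product emb plane g"
    and "\<And>v. g vzero v = 0" "\<And>w. g w vzero = 0"
    and "g diag (unit_vec 0) \<noteq> 0" "g (unit_vec 0) diag \<noteq> 0"
  shows "\<exists>(E :: 'k vec set) g f n H.
            is_subspace E \<and> finite_dim E \<and> is_inner_product emb E g \<and> is_endo E f
          \<and> is_direct_sum E n H \<and> (\<forall>i\<in>{1..n}. f ` H i \<subseteq> H i)
          \<and> subspace_sum n (\<lambda>i. orth_in g (H i) (kerf (H i) f)) \<noteq> orth_in g E (kerf E f)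
          \<and> subspace_sum n (\<lambda>i. orth_in g (H i) (f ` H i)) \<noteq> orth_in g E (f ` E)"
  using plane_subspace finite_dim_plane assms(1) proj_along_diag_endo direct_sum_axis_and_diag
    axis_and_diag_invariant proj_along_diag_orth_sums_ne[OF assms(2-5)]
  by blast

definition real_dot :: "real vec \<Rightarrow> real vec \<Rightarrow> real" where
  "real_dot u v = u 0 * v 0 + u 1 * v 1"

definition complex_dot :: "complex vec \<Rightarrow> complex vec \<Rightarrow> complex" where
  "complex_dot u v = u 0 * cnj (v 0) + u 1 * cnj (v 1)"

lemma real_dot_inner_product: "is_inner_product complex_of_real plane real_dot"
  unfolding is_inner_product_def
proof (intro conjI ballI allI impI)
  fix v :: "real vec" assume "v \<in> plane" "v \<noteq> vzero"
  then have "real_dot v v > 0"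
    using plane_nonzero_coord unfolding real_dot_def by (simp add: sum_squares_gt_zero_iff)
  then show "Im (complex_of_real (real_dot v v)) = 0" "Re (complex_of_real (real_dot v v)) > 0"
    by simp_all
qed (auto simp: real_dot_def vadd_def smul_def algebra_simps)

lemma complex_dot_inner_product: "is_inner_product id plane complex_dot"
  unfolding is_inner_product_def
proof (intro conjI ballI allI impI)
  fix v :: "complex vec" assume "v \<in> plane" "v \<noteq> vzero"
  then have "(Re (v 0))\<^sup>2 + (Im (v 0))\<^sup>2 + ((Re (v 1))\<^sup>2 + (Im (v 1))\<^sup>2) > 0"
    using plane_nonzero_coord
    by (metis add_nonneg_pos add_pos_nonneg complex_neq_0 sum_power2_ge_zero)
  then show "Im (id (complex_dot v v)) = 0" "Re (id (complex_dot v v)) > 0"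
    by (auto simp: complex_dot_def complex_mult_cnj)
qed (auto simp: complex_dot_def vadd_def smul_def algebra_simps)

theorem lemma3p4:
  shows "(\<exists>(E :: real vec set) g f n H.
            is_subspace E \<and> finite_dim E \<and> is_inner_product complex_of_real E g \<and> is_endo E f
          \<and> is_direct_sum E n H \<and> (\<forall>i\<in>{1..n}. f ` H i \<subseteq> H i)
          \<and> subspace_sum n (\<lambda>i. orth_in g (H i) (kerf (H i) f)) \<noteq> orth_in g E (kerf E f)
          \<and> subspace_sum n (\<lambda>i. orth_in g (H i) (f ` H i)) \<noteq> orth_in g E (f ` E))
       \<and> (\<exists>(E :: complex vec set) g f n H.
            is_subspace E \<and> finite_dim E \<and> is_inner_product id E g \<and> is_endo E f
          \<and> is_direct_sum E n H \<and> (\<forall>i\<in>{1..n}. f ` H i \<subseteq> H i)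
          \<and> subspace_sum n (\<lambda>i. orth_in g (H i) (kerf (H i) f)) \<noteq> orth_in g E (kerf E f)
          \<and> subspace_sum n (\<lambda>i. orth_in g (H i) (f ` H i)) \<noteq> orth_in g E (f ` E))"
  by (intro conjI orth_sums_counterexample_of_form[OF real_dot_inner_product]
      orth_sums_counterexample_of_form[OF complex_dot_inner_product])
     (simp_all add: real_dot_def complex_dot_def diag_def unit_vec_def vadd_def vzero_def)

end
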